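(* For each $k\ge0$ there is a finite $k$-graph $\Gamma$ whose topological realisation $X_\Gamma$ is homeomorphic to the $k$-sphere $S^k$.
   Context: A $k$-graph is a countable small category $\Lambda$ with a functor $d:\Lambda\to\mathbb{N}^k$ ($\mathbb{N}^0=\{0\}$) such that, writing $\Lambda^n=d^{-1}(n)$, composition is a bijection from $\{(\mu,\nu)\in\Lambda^m\times\Lambda^n:s(\mu)=r(\nu)\}$ onto $\Lambda^{m+n}$; finite means finitely many morphisms. For $k\ge1$: $\lambda(m,n)$ is the unique $\beta\in\Lambda^{n-m}$ with $\lambda=\alpha\beta\gamma$, $d(\alpha)=m$; $\lceil t\rceil,\lfloor t\rfloor$ are coordinatewise ceiling/floor; $[0,m]=\{t\in\mathbb{R}^k:0\le t\le m\}$; the topological realisation $X_\Lambda$ is the quotient of $\bigsqcup_\lambda\{\lambda\}\times[0,d(\lambda)]$ by $(\mu,s)\sim(\nu,t)\iff\mu(\lfloor s\rfloor,\lceil s\rceil)=\nu(\lfloor t\rfloor,\lceil t\rceil)$ and $s-\lfloor s\rfloor=t-\lfloor t\rfloor$. For $k=0$, $\Lambda=\Lambda^0$ and $X_\Lambda$ is the discrete space $\Lambda^0$ ($S^0$ is a two-point discrete space). *)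

theory Defs
  imports "HOL-Analysis.Analysis"
begin

definition eqclass :: "'a topology \<Rightarrow> ('a \<Rightarrow> 'a \<Rightarrow> bool) \<Rightarrow> 'a \<Rightarrow> 'a set" where
  "eqclass X R x = {y \<in> topspace X. R x y}"

definition quotient_topology :: "'a topology \<Rightarrow> ('a \<Rightarrow> 'a \<Rightarrow> bool) \<Rightarrow> 'a set topology" where
  "quotient_topology X R = topology (\<lambda>U. U \<subseteq> eqclass X R ` topspace X \<and>
       openin X {x \<in> topspace X. eqclass X R x \<in> U})"

lemma istopology_quotient:
  "istopology (\<lambda>U. U \<subseteq> eqclass X R ` topspace X \<and>
       openin X {x \<in> topspace X. eqclass X R x \<in> U})"
proof -
  have 1: "{x \<in> topspace X. eqclass X R x \<in> S \<inter> T} =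
           {x \<in> topspace X. eqclass X R x \<in> S} \<inter> {x \<in> topspace X. eqclass X R x \<in> T}" for S T
    by auto
  have 2: "{x \<in> topspace X. eqclass X R x \<in> \<Union>K} =
           \<Union>((\<lambda>U. {x \<in> topspace X. eqclass X R x \<in> U}) ` K)" for K
    by auto
  show ?thesis
    unfolding istopology_def 1 2 by auto
qed

text \<open>A small category is rendered single-sorted: objects are identified with their
  identity morphisms; r, s give the identity morphisms of range and source.\<close>

definition Nk :: "nat \<Rightarrow> (nat \<Rightarrow> nat) set" where
  "Nk k = {m. \<forall>i\<ge>k. m i = 0}"

definition is_category :: "'a set \<Rightarrow> ('a \<Rightarrow> 'a) \<Rightarrow> ('a \<Rightarrow> 'a) \<Rightarrow> ('a \<Rightarrow> 'a \<Rightarrow> 'a) \<Rightarrow> bool" where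
  "is_category L r s cmp \<longleftrightarrow>
     (\<forall>x\<in>L. r x \<in> L \<and> s x \<in> L \<and>
        r (r x) = r x \<and> s (r x) = r x \<and> r (s x) = s x \<and> s (s x) = s x \<and>
        cmp (r x) x = x \<and> cmp x (s x) = x) \<and>
     (\<forall>x\<in>L. \<forall>y\<in>L. s x = r y \<longrightarrow>
        cmp x y \<in> L \<and> r (cmp x y) = r x \<and> s (cmp x y) = s y) \<and>
     (\<forall>x\<in>L. \<forall>y\<in>L. \<forall>z\<in>L. s x = r y \<and> s y = r z \<longrightarrow>
        cmp (cmp x y) z = cmp x (cmp y z))"

definition is_kgraph :: "nat \<Rightarrow> 'a set \<Rightarrow> ('a \<Rightarrow> 'a) \<Rightarrow> ('a \<Rightarrow> 'a) \<Rightarrow> ('a \<Rightarrow> 'a \<Rightarrow> 'a)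
     \<Rightarrow> ('a \<Rightarrow> nat \<Rightarrow> nat) \<Rightarrow> bool" where
  "is_kgraph k L r s cmp d \<longleftrightarrow>
     countable L \<and> is_category L r s cmp \<and>
     \<comment> \<open>d is a functor to N^k\<close>
     (\<forall>x\<in>L. d x \<in> Nk k \<and> d (r x) = (\<lambda>i. 0)) \<and>
     (\<forall>x\<in>L. \<forall>y\<in>L. s x = r y \<longrightarrow> d (cmp x y) = (\<lambda>i. d x i + d y i)) \<and>
     \<comment> \<open>unique factorisation property\<close>
     (\<forall>m\<in>Nk k. \<forall>n\<in>Nk k. \<forall>l\<in>L. d l = (\<lambda>i. m i + n i) \<longrightarrow>
        (\<exists>!(x, y). x \<in> L \<and> y \<in> L \<and> d x = m \<and> d y = n \<and> s x = r y \<and> cmp x y = l))"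

definition segment :: "'a set \<Rightarrow> ('a \<Rightarrow> 'a) \<Rightarrow> ('a \<Rightarrow> 'a) \<Rightarrow> ('a \<Rightarrow> 'a \<Rightarrow> 'a)
     \<Rightarrow> ('a \<Rightarrow> nat \<Rightarrow> nat) \<Rightarrow> 'a \<Rightarrow> (nat \<Rightarrow> nat) \<Rightarrow> (nat \<Rightarrow> nat) \<Rightarrow> 'a" where
  "segment L r s cmp d l m n = (THE b. b \<in> L \<and> d b = (\<lambda>i. n i - m i) \<and>
      (\<exists>a\<in>L. \<exists>c\<in>L. d a = m \<and> s a = r b \<and> s b = r c \<and> cmp (cmp a b) c = l))"

definition cube :: "nat \<Rightarrow> (nat \<Rightarrow> nat) \<Rightarrow> (nat \<Rightarrow> real) set" where
  "cube k m = {t. (\<forall>i<k. 0 \<le> t i \<and> t i \<le> real (m i)) \<and> (\<forall>i\<ge>k. t i = 0)}"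

definition flr :: "(nat \<Rightarrow> real) \<Rightarrow> nat \<Rightarrow> nat" where
  "flr t = (\<lambda>i. nat \<lfloor>t i\<rfloor>)"

definition ceil :: "(nat \<Rightarrow> real) \<Rightarrow> nat \<Rightarrow> nat" where
  "ceil t = (\<lambda>i. nat \<lceil>t i\<rceil>)"

definition realisation_rel :: "'a set \<Rightarrow> ('a \<Rightarrow> 'a) \<Rightarrow> ('a \<Rightarrow> 'a) \<Rightarrow> ('a \<Rightarrow> 'a \<Rightarrow> 'a)
     \<Rightarrow> ('a \<Rightarrow> nat \<Rightarrow> nat) \<Rightarrow> ('a \<times> (nat \<Rightarrow> real)) \<Rightarrow> ('a \<times> (nat \<Rightarrow> real)) \<Rightarrow> bool" where
  "realisation_rel L r s cmp d = (\<lambda>(mu, a) (nu, b).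
      segment L r s cmp d mu (flr a) (ceil a) = segment L r s cmp d nu (flr b) (ceil b) \<and>
      (\<lambda>i. a i - of_int \<lfloor>a i\<rfloor>) = (\<lambda>i. b i - of_int \<lfloor>b i\<rfloor>))"

definition realisation :: "nat \<Rightarrow> 'a set \<Rightarrow> ('a \<Rightarrow> 'a) \<Rightarrow> ('a \<Rightarrow> 'a) \<Rightarrow> ('a \<Rightarrow> 'a \<Rightarrow> 'a)
     \<Rightarrow> ('a \<Rightarrow> nat \<Rightarrow> nat) \<Rightarrow> ('a \<times> (nat \<Rightarrow> real)) set topology" where
  "realisation k L r s cmp d =
     quotient_topology
       (sum_topology (\<lambda>l. subtopology (Euclidean_space k) (cube k (d l))) L)
       (realisation_rel L r s cmp d)"

end

theory Submission
  imports Defs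
begin

text \<open>For k \<ge> 1 take four copies of the cube [0,1]^k, indexed by two flags a and b, and glue
  the two a-copies along the faces where some coordinate is 1 and the two b-copies along the faces
  where some coordinate is 0. The cubical faces that survive this gluing are the morphisms of a
  finite k-graph, and the topological realisation of that k-graph is the glued space. The map
  sending P with flags a, b to the direction of
  (P 0 - P (k-1), ..., P (k-2) - P (k-1), \<plusminus>(1 - max P), \<plusminus>min P) in R^(k+1) identifies
  exactly the glued points and is onto S^k; a continuous surjection from a compact space onto a
  Hausdorff space is a quotient map, so the realisation is homeomorphic to S^k. For k = 0 the
  two-vertex 0-graph realises S^0.\<close>

section \<open>Quotient and sum topologies\<close>

lemma openin_quotient_topology:
  "openin (quotient_topology X R) U \<longleftrightarrow>
     U \<subseteq> eqclass X R ` topspace X \<and> openin X {x \<in> topspace X. eqclass X R x \<in> U}"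
  unfolding quotient_topology_def using istopology_quotient[of X R]
  by (simp add: topology_inverse')

lemma topspace_quotient_topology:
  "topspace (quotient_topology X R) = eqclass X R ` topspace X"
proof -
  have "openin X {x \<in> topspace X. eqclass X R x \<in> eqclass X R ` topspace X}"
    by (simp add: Collect_conj_eq Int_absorb2 subset_eq)
  then have "openin (quotient_topology X R) (eqclass X R ` topspace X)"
    by (simp add: openin_quotient_topology)
  then show ?thesis
    using openin_subset openin_quotient_topology[of X R "topspace (quotient_topology X R)"]
    by blast
qed

lemma quotient_map_eqclass: "quotient_map X (quotient_topology X R) (eqclass X R)"
  unfolding quotient_map_def openin_quotient_topology topspace_quotient_topology
  by auto

lemma quotient_topology_homeomorphic_space:
  assumes f: "quotient_map X Y f"
    and R: "\<And>x y. x \<in> topspace X \<Longrightarrow> y \<in> topspace X \<Longrightarrow> R x y \<longleftrightarrow> f x = f y"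
  shows "quotient_topology X R homeomorphic_space Y"
proof -
  let ?Q = "quotient_topology X R" and ?q = "eqclass X R"
  have q: "quotient_map X ?Q ?q" by (rule quotient_map_eqclass)
  have same_fibres: "?q x = ?q y \<longleftrightarrow> f x = f y" if "x \<in> topspace X" "y \<in> topspace X" for x y
  proof
    assume "?q x = ?q y"
    then have "y \<in> ?q x" using that R unfolding eqclass_def by blast
    then show "f x = f y" using that R unfolding eqclass_def by blast
  qed (use that R in \<open>auto simp: eqclass_def\<close>)
  obtain g where g: "continuous_map ?Q Y g" "\<And>x. x \<in> topspace X \<Longrightarrow> g (?q x) = f x"
    using quotient_map_lift_exists[OF q quotient_imp_continuous_map[OF f]] same_fibres by metis
  obtain h where h: "continuous_map Y ?Q h" "\<And>x. x \<in> topspace X \<Longrightarrow> h (f x) = ?q x"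
    using quotient_map_lift_exists[OF f quotient_imp_continuous_map[OF q]] same_fibres by metis
  have "homeomorphic_maps ?Q Y g h"
    unfolding homeomorphic_maps_def
  proof (intro conjI ballI)
    fix C assume "C \<in> topspace ?Q"
    then obtain x where "x \<in> topspace X" "C = ?q x"
      using quotient_imp_surjective_map[OF q] by blast
    then show "h (g C) = C" using g h by simp
  next
    fix y assume "y \<in> topspace Y"
    then obtain x where "x \<in> topspace X" "y = f x"
      using quotient_imp_surjective_map[OF f] by blast
    then show "g (h y) = y" using g h by simp
  qed (use g h in auto)
  then show ?thesis
    unfolding homeomorphic_space_def by blast
qed

lemma continuous_map_from_sum_topology:
  assumes "\<And>i. i \<in> I \<Longrightarrow> continuous_map (X i) Y (\<lambda>x. f (i, x))"
  shows "continuous_map (sum_topology X I) Y f"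
  unfolding continuous_map_def
proof (intro conjI allI impI)
  show "f \<in> topspace (sum_topology X I) \<rightarrow> topspace Y"
    using assms by (force simp: continuous_map_def Pi_iff)
  fix U assume U: "openin Y U"
  have "openin (X i) {x. (i, x) \<in> {z \<in> topspace (sum_topology X I). f z \<in> U}}" if "i \<in> I" for i
  proof -
    have "{x. (i, x) \<in> {z \<in> topspace (sum_topology X I). f z \<in> U}} =
        {x \<in> topspace (X i). f (i, x) \<in> U}"
      using that by auto
    then show ?thesis
      using assms[OF that] U by (simp add: continuous_map_def)
  qed
  then show "openin (sum_topology X I) {z \<in> topspace (sum_topology X I). f z \<in> U}"
    unfolding openin_sum_topology by auto
qed

lemma compact_space_sum_topology:
  assumes "finite I" "\<And>i. i \<in> I \<Longrightarrow> compact_space (X i)"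
  shows "compact_space (sum_topology X I)"
proof -
  have "topspace (sum_topology X I) = (\<Union>i\<in>I. Pair i ` topspace (X i))"
    by auto
  moreover have "compactin (sum_topology X I) (\<Union>i\<in>I. Pair i ` topspace (X i))"
    using assms
    by (intro compactin_Union) (auto intro!: image_compactin continuous_map_component_injection
        simp: compact_space_def)
  ultimately show ?thesis by (simp add: compact_space_def)
qed

section \<open>Realisations of k-graphs\<close>

lemma topspace_cube: "topspace (subtopology (Euclidean_space k) (cube k m)) = cube k m"
  by (auto simp: topspace_Euclidean_space cube_def)

lemma compact_space_cube: "compact_space (subtopology (Euclidean_space k) (cube k m))"
proof -
  have "cube k m = PiE UNIV (\<lambda>i. if i < k then {0..real (m i)} else {0})"
    by (auto simp: cube_def PiE_UNIV_domain Pi_iff split: if_splits)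
  then have "compactin (powertop_real UNIV) (cube k m)"
    by (simp add: compactin_PiE)
  moreover have "cube k m \<subseteq> topspace (Euclidean_space k)"
    by (auto simp: cube_def topspace_Euclidean_space)
  ultimately show ?thesis
    by (simp add: Euclidean_space_def compactin_subtopology compact_space_subtopology)
qed

definition realisation_map :: "nat \<Rightarrow> 'a set \<Rightarrow> ('a \<Rightarrow> 'a) \<Rightarrow> ('a \<Rightarrow> 'a) \<Rightarrow> ('a \<Rightarrow> 'a \<Rightarrow> 'a)
     \<Rightarrow> ('a \<Rightarrow> nat \<Rightarrow> nat) \<Rightarrow> 'b topology \<Rightarrow> ('a \<times> (nat \<Rightarrow> real) \<Rightarrow> 'b) \<Rightarrow> bool" where
  "realisation_map k L r s cmp d Y G \<longleftrightarrow>
     (\<forall>l\<in>L. continuous_map (subtopology (Euclidean_space k) (cube k (d l))) Y (\<lambda>t. G (l, t))) \<and>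
     G ` (SIGMA l:L. cube k (d l)) = topspace Y \<and>
     (\<forall>u\<in>SIGMA l:L. cube k (d l). \<forall>v\<in>SIGMA l:L. cube k (d l).
        realisation_rel L r s cmp d u v \<longleftrightarrow> G u = G v)"

lemma realisation_homeomorphic_space:
  assumes "finite L" "Hausdorff_space Y" and G: "realisation_map k L r s cmp d Y G"
  shows "realisation k L r s cmp d homeomorphic_space Y"
proof -
  let ?X = "sum_topology (\<lambda>l. subtopology (Euclidean_space k) (cube k (d l))) L"
  have X: "topspace ?X = (SIGMA l:L. cube k (d l))"
    unfolding topspace_sum_topology o_def topspace_cube ..
  have "continuous_map ?X Y G"
    using G by (intro continuous_map_from_sum_topology) (auto simp: realisation_map_def)
  moreover have "compact_space ?X"
    using assms(1) by (intro compact_space_sum_topology compact_space_cube)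
  moreover have "G ` topspace ?X = topspace Y"
    using G unfolding X realisation_map_def by blast
  ultimately have "quotient_map ?X Y G"
    using assms(2) by (intro continuous_imp_quotient_map)
  then show ?thesis
    unfolding realisation_def
    using G by (intro quotient_topology_homeomorphic_space) (simp_all only: X realisation_map_def)
qed

definition is_segment :: "'a set \<Rightarrow> ('a \<Rightarrow> 'a) \<Rightarrow> ('a \<Rightarrow> 'a) \<Rightarrow> ('a \<Rightarrow> 'a \<Rightarrow> 'a)
     \<Rightarrow> ('a \<Rightarrow> nat \<Rightarrow> nat) \<Rightarrow> 'a \<Rightarrow> (nat \<Rightarrow> nat) \<Rightarrow> (nat \<Rightarrow> nat) \<Rightarrow> 'a \<Rightarrow> bool" where
  "is_segment L r s cmp d l m n b \<longleftrightarrow> b \<in> L \<and> d b = (\<lambda>i. n i - m i) \<and>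
      (\<exists>a\<in>L. \<exists>c\<in>L. d a = m \<and> s a = r b \<and> s b = r c \<and> cmp (cmp a b) c = l)"

lemma segment_is_segment: "segment L r s cmp d l m n = (THE b. is_segment L r s cmp d l m n b)"
  by (simp add: segment_def is_segment_def)

context
  fixes k L r s cmp d
  assumes kgraph: "is_kgraph k L r s cmp d"
begin

lemma kgraph_deg: "x \<in> L \<Longrightarrow> d x \<in> Nk k"
  using kgraph by (simp add: is_kgraph_def)

lemma kgraph_comp:
  assumes "x \<in> L" "y \<in> L" "s x = r y"
  shows "cmp x y \<in> L" "s (cmp x y) = s y" "d (cmp x y) = (\<lambda>i. d x i + d y i)"
  using kgraph assms by (auto simp: is_kgraph_def is_category_def)

lemma kgraph_factorisation:
  assumes "l \<in> L" "m \<in> Nk k" "n \<in> Nk k" "d l = (\<lambda>i. m i + n i)"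
  obtains x y where "x \<in> L" "y \<in> L" "d x = m" "d y = n" "s x = r y" "cmp x y = l"
  using kgraph assms unfolding is_kgraph_def by blast

lemma kgraph_factorisation_unique:
  assumes "m \<in> Nk k" "n \<in> Nk k"
    and "x \<in> L" "y \<in> L" "d x = m" "d y = n" "s x = r y"
    and "x' \<in> L" "y' \<in> L" "d x' = m" "d y' = n" "s x' = r y'" "cmp x' y' = cmp x y"
  shows "x' = x \<and> y' = y"
proof -
  let ?P = "\<lambda>(x', y'). x' \<in> L \<and> y' \<in> L \<and> d x' = m \<and> d y' = n \<and> s x' = r y' \<and> cmp x' y' = cmp x y"
  have "cmp x y \<in> L" "d (cmp x y) = (\<lambda>i. m i + n i)"
    using kgraph_comp assms by auto
  then have "\<exists>!p. ?P p"
    using kgraph assms(1,2) unfolding is_kgraph_def by simp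
  then obtain p where "\<And>p'. ?P p' \<Longrightarrow> p' = p"
    by (rule ex1E) blast
  then have "(x', y') = p" "(x, y) = p"
    using assms by simp_all
  then show ?thesis
    by (metis prod.inject)
qed

lemma kgraph_segment_unique:
  assumes l: "l \<in> L" and mn: "\<And>i. m i \<le> n i" and nl: "\<And>i. n i \<le> d l i"
  shows "\<exists>!b. is_segment L r s cmp d l m n b"
proof -
  define n' where "n' = (\<lambda>i. d l i - n i)"
  have "n i = 0" "m i = 0" "d l i = 0" if "i \<ge> k" for i
    using kgraph_deg[OF l] that mn[of i] nl[of i] by (auto simp: Nk_def)
  then have Nk: "m \<in> Nk k" "n \<in> Nk k" "(\<lambda>i. n i - m i) \<in> Nk k" "n' \<in> Nk k"
    by (auto simp: Nk_def n'_def)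
  have dl: "d l = (\<lambda>i. n i + n' i)" and dn: "n = (\<lambda>i. m i + (n i - m i))"
    using mn nl by (auto simp: n'_def)
  obtain ab c where ab: "ab \<in> L" "c \<in> L" "d ab = n" "d c = n'" "s ab = r c" "cmp ab c = l"
    using kgraph_factorisation[OF l Nk(2,4) dl] by blast
  obtain a b where b: "a \<in> L" "b \<in> L" "d a = m" "d b = (\<lambda>i. n i - m i)" "s a = r b" "cmp a b = ab"
    using kgraph_factorisation[OF ab(1) Nk(1,3)] ab(3) dn by metis
  show ?thesis
  proof
    show "is_segment L r s cmp d l m n b"
      unfolding is_segment_def using ab b kgraph_comp(2)[OF b(1,2,5)] by metis
  next
    fix b' assume "is_segment L r s cmp d l m n b'"
    then obtain a' c' where b': "b' \<in> L" "d b' = (\<lambda>i. n i - m i)" "a' \<in> L" "c' \<in> L" "d a' = m"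
        "s a' = r b'" "s b' = r c'" "cmp (cmp a' b') c' = l"
      unfolding is_segment_def by blast
    have ab': "cmp a' b' \<in> L" "s (cmp a' b') = r c'" "d (cmp a' b') = n"
      using kgraph_comp[OF b'(3,1,6)] b'(2,5,7) by (simp_all add: dn[symmetric])
    have "d l = (\<lambda>i. n i + d c' i)"
      using kgraph_comp(3)[OF ab'(1) b'(4) ab'(2)] b'(8) ab'(3) by simp
    then have "d c' = n'"
      by (simp add: n'_def)
    then have "cmp a' b' = ab"
      using kgraph_factorisation_unique[OF Nk(2,4) ab(1-5) ab'(1) b'(4) ab'(3) _ ab'(2)] ab(6) b'(8)
      by simp
    then show "b' = b"
      using kgraph_factorisation_unique[OF Nk(1,3) b(1-5) b'(3,1,5,2,6)] b(6) by simp
  qed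
qed

lemma segment_eqI:
  assumes "l \<in> L" "\<And>i. m i \<le> n i" "\<And>i. n i \<le> d l i" "is_segment L r s cmp d l m n b"
  shows "segment L r s cmp d l m n = b"
  unfolding segment_is_segment
  by (rule the1_equality[OF kgraph_segment_unique[OF assms(1-3)] assms(4)])

end

lemma flr_le_ceil: "flr t i \<le> ceil t i"
  by (simp add: flr_def ceil_def nat_mono floor_le_ceiling)

lemma ceil_le_of_cube: "t \<in> cube k m \<Longrightarrow> ceil t i \<le> m i"
  by (cases "i < k") (auto simp: cube_def ceil_def ceiling_le_iff)

context
  fixes k E R S C D and f :: "'a \<Rightarrow> 'b" and g
  assumes kgraph: "is_kgraph k E R S C D" and gf: "\<And>x. x \<in> E \<Longrightarrow> g (f x) = x"
begin

lemma relabel_eq_iff: "x \<in> E \<Longrightarrow> y \<in> E \<Longrightarrow> f x = f y \<longleftrightarrow> x = y"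
  by (metis gf)

lemma is_kgraph_image:
  "is_kgraph k (f ` E) (\<lambda>u. f (R (g u))) (\<lambda>u. f (S (g u))) (\<lambda>u v. f (C (g u) (g v))) (\<lambda>u. D (g u))"
proof -
  have cat: "is_category E R S C" and ct: "countable E"
    using kgraph by (simp_all add: is_kgraph_def)
  have RS: "R x \<in> E" "S x \<in> E" if "x \<in> E" for x
    using cat that by (simp_all add: is_category_def)
  have CE: "C x y \<in> E" if "x \<in> E" "y \<in> E" "S x = R y" for x y
    using cat that by (simp add: is_category_def)
  note simps = gf RS CE relabel_eq_iff
  have cat': "is_category (f ` E) (\<lambda>u. f (R (g u))) (\<lambda>u. f (S (g u))) (\<lambda>u v. f (C (g u) (g v)))"
    using cat unfolding is_category_def by (auto simp: simps)
  have deg': "\<forall>x\<in>f ` E. D (g x) \<in> Nk k \<and> D (g (f (R (g x)))) = (\<lambda>i. 0)"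
    using kgraph unfolding is_kgraph_def by (auto simp: simps)
  have add': "\<forall>x\<in>f ` E. \<forall>y\<in>f ` E. f (S (g x)) = f (R (g y)) \<longrightarrow>
      D (g (f (C (g x) (g y)))) = (\<lambda>i. D (g x) i + D (g y) i)"
    using kgraph unfolding is_kgraph_def by (auto simp: simps)
  have uf': "\<exists>!(x, y). x \<in> f ` E \<and> y \<in> f ` E \<and> D (g x) = m \<and> D (g y) = n \<and>
      f (S (g x)) = f (R (g y)) \<and> f (C (g x) (g y)) = u"
    if mn: "m \<in> Nk k" "n \<in> Nk k" and u: "u \<in> f ` E" "D (g u) = (\<lambda>i. m i + n i)" for m n u
  proof -
    obtain l where l: "l \<in> E" "u = f l"
      using u(1) by blast
    let ?P = "\<lambda>(x, y). x \<in> E \<and> y \<in> E \<and> D x = m \<and> D y = n \<and> S x = R y \<and> C x y = l"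
    have "\<exists>!p. ?P p"
      using kgraph mn u(2) l unfolding is_kgraph_def by (simp add: gf)
    then obtain p where "?P p" "\<And>p'. ?P p' \<Longrightarrow> p' = p"
      by (rule ex1E) blast
    then have "\<exists>!q. \<exists>p. ?P p \<and> q = map_prod f f p"
      by blast
    moreover have "(\<lambda>(x, y). x \<in> f ` E \<and> y \<in> f ` E \<and> D (g x) = m \<and> D (g y) = n \<and>
        f (S (g x)) = f (R (g y)) \<and> f (C (g x) (g y)) = u) = (\<lambda>q. \<exists>p. ?P p \<and> q = map_prod f f p)"
      using l by (auto simp: simps fun_eq_iff) blast
    ultimately show ?thesis
      by (simp only:)
  qed
  show ?thesis
    unfolding is_kgraph_def
  proof (intro conjI)
    show "\<forall>m\<in>Nk k. \<forall>n\<in>Nk k. \<forall>l\<in>f ` E. D (g l) = (\<lambda>i. m i + n i) \<longrightarrow>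
      (\<exists>!(x, y). x \<in> f ` E \<and> y \<in> f ` E \<and> D (g x) = m \<and> D (g y) = n \<and>
         f (S (g x)) = f (R (g y)) \<and> f (C (g x) (g y)) = l)"
      by (intro ballI impI) (rule uf')
  qed (use ct cat' deg' add' in simp_all)
qed

lemma segment_image:
  assumes x: "x \<in> E" and mn: "\<And>i. m i \<le> n i" and nx: "\<And>i. n i \<le> D x i"
  shows "segment (f ` E) (\<lambda>u. f (R (g u))) (\<lambda>u. f (S (g u))) (\<lambda>u v. f (C (g u) (g v))) (\<lambda>u. D (g u))
           (f x) m n = f (segment E R S C D x m n)"
    and "segment E R S C D x m n \<in> E"
proof -
  let ?b = "segment E R S C D x m n"
  have "is_segment E R S C D x m n ?b"
    unfolding segment_is_segment using kgraph_segment_unique[OF kgraph x mn nx] by (rule theI')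
  then obtain a c where b: "?b \<in> E" "D ?b = (\<lambda>i. n i - m i)" "a \<in> E" "c \<in> E" "D a = m"
      "S a = R ?b" "S ?b = R c" "C (C a ?b) c = x"
    unfolding is_segment_def by blast
  then show "?b \<in> E" by blast
  have "C a ?b \<in> E"
    using kgraph_comp(1)[OF kgraph b(3,1,6)] .
  then have "D (g (f a)) = m \<and> f (S (g (f a))) = f (R (g (f ?b))) \<and>
      f (S (g (f ?b))) = f (R (g (f c))) \<and>
      f (C (g (f (C (g (f a)) (g (f ?b))))) (g (f c))) = f x"
    using b by (simp add: gf)
  then have "is_segment (f ` E) (\<lambda>u. f (R (g u))) (\<lambda>u. f (S (g u))) (\<lambda>u v. f (C (g u) (g v)))
      (\<lambda>u. D (g u)) (f x) m n (f ?b)"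
    unfolding is_segment_def using b(1-4) by (simp add: gf) blast
  then show "segment (f ` E) (\<lambda>u. f (R (g u))) (\<lambda>u. f (S (g u))) (\<lambda>u v. f (C (g u) (g v)))
      (\<lambda>u. D (g u)) (f x) m n = f ?b"
    using segment_eqI[OF is_kgraph_image] x mn nx by (simp add: gf)
qed

lemma realisation_rel_image:
  assumes "x \<in> E" "t \<in> cube k (D x)" "y \<in> E" "u \<in> cube k (D y)"
  shows "realisation_rel (f ` E) (\<lambda>u. f (R (g u))) (\<lambda>u. f (S (g u))) (\<lambda>u v. f (C (g u) (g v)))
           (\<lambda>u. D (g u)) (f x, t) (f y, u) \<longleftrightarrow> realisation_rel E R S C D (x, t) (y, u)"
  using segment_image[OF assms(1) flr_le_ceil ceil_le_of_cube[OF assms(2)]]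
    segment_image[OF assms(3) flr_le_ceil ceil_le_of_cube[OF assms(4)]] relabel_eq_iff
  by (simp add: realisation_rel_def)

lemma realisation_map_image:
  assumes G: "realisation_map k E R S C D Y G"
  shows "realisation_map k (f ` E) (\<lambda>u. f (R (g u))) (\<lambda>u. f (S (g u))) (\<lambda>u v. f (C (g u) (g v)))
           (\<lambda>u. D (g u)) Y (\<lambda>(u, t). G (g u, t))"
proof -
  have "(\<lambda>(u, t). G (g u, t)) ` (SIGMA u:f ` E. cube k (D (g u))) = G ` (SIGMA x:E. cube k (D x))"
    by (force simp: gf image_iff)
  then show ?thesis
    using G unfolding realisation_map_def by (auto simp: gf realisation_rel_image)
qed

end

section \<open>The sphere as four glued cubes\<close>

lemma continuous_map_Max:
  fixes g :: "'i \<Rightarrow> 'x \<Rightarrow> real"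
  assumes "finite I" "I \<noteq> {}" "\<And>i. i \<in> I \<Longrightarrow> continuous_map X euclideanreal (g i)"
  shows "continuous_map X euclideanreal (\<lambda>x. Max ((\<lambda>i. g i x) ` I))"
  using assms by (induction I rule: finite_ne_induct) (auto intro: continuous_map_real_max)

lemma continuous_map_Min:
  fixes g :: "'i \<Rightarrow> 'x \<Rightarrow> real"
  assumes "finite I" "I \<noteq> {}" "\<And>i. i \<in> I \<Longrightarrow> continuous_map X euclideanreal (g i)"
  shows "continuous_map X euclideanreal (\<lambda>x. Min ((\<lambda>i. g i x) ` I))"
  using assms by (induction I rule: finite_ne_induct) (auto intro: continuous_map_real_min)

definition cmax :: "nat \<Rightarrow> (nat \<Rightarrow> real) \<Rightarrow> real" where
  "cmax k P = Max (P ` {..<k})"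

definition cmin :: "nat \<Rightarrow> (nat \<Rightarrow> real) \<Rightarrow> real" where
  "cmin k P = Min (P ` {..<k})"

definition bsign :: "bool \<Rightarrow> real" where
  "bsign a = (if a then 1 else -1)"

text \<open>For k \<ge> 1, P ranges over [0,1]^k = cube k (\<lambda>_. 1); the flag a does not matter where
  max P = 1, nor b where min P = 0.\<close>

definition sphere_coords :: "nat \<Rightarrow> (nat \<Rightarrow> real) \<Rightarrow> bool \<Rightarrow> bool \<Rightarrow> nat \<Rightarrow> real" where
  "sphere_coords k P a b c =
     (if c < k - 1 then P c - P (k - 1)
      else if c = k - 1 then bsign a * (1 - cmax k P)
      else if c = k then bsign b * cmin k P
      else 0)"

definition sphere_point :: "nat \<Rightarrow> (nat \<Rightarrow> real) \<Rightarrow> bool \<Rightarrow> bool \<Rightarrow> nat \<Rightarrow> real" where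
  "sphere_point k P a b = (\<lambda>c. sphere_coords k P a b c / L2_set (sphere_coords k P a b) {..k})"

definition leading :: "nat \<Rightarrow> (nat \<Rightarrow> real) \<Rightarrow> nat \<Rightarrow> real" where
  "leading k z = (\<lambda>c. if c < k - 1 then z c else 0)"

text \<open>Left inverse of sphere_coords up to positive scaling: the denominator is
  1 on the image of sphere_coords.\<close>

definition cube_scale :: "nat \<Rightarrow> (nat \<Rightarrow> real) \<Rightarrow> real" where
  "cube_scale k z = \<bar>z (k - 1)\<bar> + \<bar>z k\<bar> + (cmax k (leading k z) - cmin k (leading k z))"

definition cube_coords :: "nat \<Rightarrow> (nat \<Rightarrow> real) \<Rightarrow> nat \<Rightarrow> real" where
  "cube_coords k z c =
     (if c < k then (leading k z c - cmin k (leading k z) + \<bar>z k\<bar>) / cube_scale k z else 0)"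

lemma cmin_le: "c < k \<Longrightarrow> cmin k P \<le> P c"
  and le_cmax: "c < k \<Longrightarrow> P c \<le> cmax k P"
  by (simp_all add: cmax_def cmin_def)

lemma cmax_cong: "(\<And>c. c < k \<Longrightarrow> f c = g c) \<Longrightarrow> cmax k f = cmax k g"
  and cmin_cong: "(\<And>c. c < k \<Longrightarrow> f c = g c) \<Longrightarrow> cmin k f = cmin k g"
  unfolding cmax_def cmin_def by (metis image_cong lessThan_iff)+

lemma bsign_abs [simp]: "\<bar>bsign a\<bar> = 1"
  and bsign_power2 [simp]: "(bsign a)\<^sup>2 = 1"
  and bsign_eq_iff [simp]: "bsign a = bsign b \<longleftrightarrow> a = b"
  and bsign_mult_abs: "bsign (0 \<le> x) * \<bar>x\<bar> = x"
  by (auto simp: bsign_def)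

lemma floor_unit: "0 \<le> (s::real) \<Longrightarrow> s \<le> 1 \<Longrightarrow> \<lfloor>s\<rfloor> = (if s = 1 then 1 else 0)"
  by (auto simp: floor_eq_iff)

lemma ceiling_unit: "0 \<le> (s::real) \<Longrightarrow> s \<le> 1 \<Longrightarrow> \<lceil>s\<rceil> = (if s = 0 then 0 else 1)"
  by (auto simp: ceiling_eq_iff)

lemma unit_cube_eq_iff:
  assumes "P \<in> cube k (\<lambda>_. 1)" "P' \<in> cube k (\<lambda>_. 1)"
  shows "P = P' \<longleftrightarrow>
           {i. P i = 1} = {i. P' i = 1} \<and> (\<lambda>i. P i - of_int \<lfloor>P i\<rfloor>) = (\<lambda>i. P' i - of_int \<lfloor>P' i\<rfloor>)"
proof
  assume h: "{i. P i = 1} = {i. P' i = 1} \<and> (\<lambda>i. P i - of_int \<lfloor>P i\<rfloor>) = (\<lambda>i. P' i - of_int \<lfloor>P' i\<rfloor>)"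
  show "P = P'"
  proof
    fix i
    have "0 \<le> P i" "P i \<le> 1" "0 \<le> P' i" "P' i \<le> 1"
      using assms by (cases "i < k"; auto simp: cube_def)+
    moreover have "P i = 1 \<longleftrightarrow> P' i = 1" "P i - of_int \<lfloor>P i\<rfloor> = P' i - of_int \<lfloor>P' i\<rfloor>"
      using h by (auto simp: set_eq_iff fun_eq_iff)
    ultimately show "P i = P' i"
      by (auto simp: floor_unit split: if_splits)
  qed
qed simp

context
  fixes k j :: nat
  assumes kj: "k = Suc j"
begin

lemma lessThan_k_nonempty: "finite {..<k}" "{..<k} \<noteq> {}"
  using kj by auto

lemma k_minus_1: "k - 1 = j" "k - Suc 0 = j"
  using kj by simp_all

lemma cmax_const [simp]: "cmax k (\<lambda>_. e) = e"
  and cmin_const [simp]: "cmin k (\<lambda>_. e) = e"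
  using lessThan_k_nonempty by (simp_all add: cmax_def cmin_def)

lemma cmax_affine: "0 \<le> l \<Longrightarrow> cmax k (\<lambda>c. l * y c + e) = l * cmax k y + e"
  and cmin_affine: "0 \<le> l \<Longrightarrow> cmin k (\<lambda>c. l * y c + e) = l * cmin k y + e"
proof -
  assume "0 \<le> l"
  then have mono: "mono (\<lambda>u::real. l * u + e)"
    by (auto intro!: monoI mult_left_mono)
  show "cmax k (\<lambda>c. l * y c + e) = l * cmax k y + e" "cmin k (\<lambda>c. l * y c + e) = l * cmin k y + e"
    using mono_Max_commute[OF mono, of "y ` {..<k}"] mono_Min_commute[OF mono, of "y ` {..<k}"]
      lessThan_k_nonempty
    by (simp_all add: cmax_def cmin_def image_image)
qed

lemma cmax_cmin_bounds:
  assumes "P \<in> cube k (\<lambda>_. 1)"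
  shows "0 \<le> cmin k P" "cmax k P \<le> 1"
  using assms lessThan_k_nonempty by (auto simp: cmax_def cmin_def cube_def)

lemma cube_coords_scale:
  assumes "0 < l"
  shows "cube_coords k (\<lambda>c. l * z c) = cube_coords k z"
proof -
  have lead: "leading k (\<lambda>c. l * z c) = (\<lambda>c. l * leading k z c + 0)"
    by (auto simp: leading_def)
  show ?thesis
  proof
    fix c
    let ?A = "leading k z c - cmin k (leading k z) + \<bar>z k\<bar>"
    have "cube_coords k (\<lambda>c. l * z c) c = (if c < k then (l * ?A) / (l * cube_scale k z) else 0)"
      unfolding cube_coords_def cube_scale_def lead cmax_affine[OF less_imp_le[OF assms]]
        cmin_affine[OF less_imp_le[OF assms]]
      using assms by (simp add: abs_mult algebra_simps)
    then show "cube_coords k (\<lambda>c. l * z c) c = cube_coords k z c"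
      using assms by (simp add: cube_coords_def)
  qed
qed

lemma sphere_coords_simps:
  "c < j \<Longrightarrow> sphere_coords k P a b c = P c - P j"
  "sphere_coords k P a b j = bsign a * (1 - cmax k P)"
  "sphere_coords k P a b k = bsign b * cmin k P"
  "k < c \<Longrightarrow> sphere_coords k P a b c = 0"
  using kj by (auto simp: sphere_coords_def)

lemma cube_coords_sphere_coords:
  assumes P: "P \<in> cube k (\<lambda>_. 1)"
  shows "cube_coords k (sphere_coords k P a b) = P"
proof
  fix c
  let ?z = "sphere_coords k P a b"
  have lead: "leading k ?z c = 1 * P c + - P j" if "c < k" for c
  proof -
    have "c < j \<or> c = j" using that kj by auto
    then show ?thesis by (auto simp: leading_def sphere_coords_simps k_minus_1)
  qed
  have "cmax k (leading k ?z) = cmax k (\<lambda>c. 1 * P c + - P j)"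
    "cmin k (leading k ?z) = cmin k (\<lambda>c. 1 * P c + - P j)"
    by (rule cmax_cong cmin_cong, rule lead, assumption)+
  then have "cmax k (leading k ?z) = cmax k P - P j" "cmin k (leading k ?z) = cmin k P - P j"
    using cmax_affine[of 1 P "- P j"] cmin_affine[of 1 P "- P j"] by simp_all
  moreover have "\<bar>?z j\<bar> = 1 - cmax k P" "\<bar>?z k\<bar> = cmin k P"
    using cmax_cmin_bounds[OF P] by (simp_all add: sphere_coords_simps abs_mult)
  ultimately show "cube_coords k ?z c = P c"
    using P lead[of c] by (auto simp: cube_coords_def cube_scale_def cube_def k_minus_1)
qed

lemma L2_sphere_coords_pos:
  assumes P: "P \<in> cube k (\<lambda>_. 1)"
  shows "0 < L2_set (sphere_coords k P a b) {..k}"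
proof (rule ccontr)
  assume "\<not> ?thesis"
  then have "sphere_coords k P a b c = 0" for c
    using L2_set_eq_0_iff[of "{..k}" "sphere_coords k P a b"] sphere_coords_simps(4)[of c]
    by (cases "c \<le> k") (auto simp: order.strict_iff_order)
  then have "sphere_coords k P a b = (\<lambda>_. 0)"
    by auto
  then have "P = cube_coords k (\<lambda>_. 0)"
    using cube_coords_sphere_coords[OF P, of a b] by simp
  also have "\<dots> = (\<lambda>_. 0)"
    by (simp add: fun_eq_iff cube_coords_def cube_scale_def leading_def)
  finally have "sphere_coords k P a b j \<noteq> 0"
    by (simp add: sphere_coords_simps bsign_def)
  with \<open>sphere_coords k P a b j = 0\<close> show False by simp
qed

lemma sphere_point_in_nsphere:
  assumes P: "P \<in> cube k (\<lambda>_. 1)"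
  shows "sphere_point k P a b \<in> topspace (nsphere k)"
proof -
  let ?z = "sphere_coords k P a b"
  have "(\<Sum>c\<le>k. (sphere_point k P a b c)\<^sup>2) = (\<Sum>c\<le>k. (?z c)\<^sup>2) / (L2_set ?z {..k})\<^sup>2"
    by (simp add: sphere_point_def power_divide sum_divide_distrib)
  also have "\<dots> = 1"
    using L2_sphere_coords_pos[OF P, of a b] by (simp add: L2_set_def sum_nonneg)
  finally show ?thesis
    by (simp add: nsphere sphere_point_def sphere_coords_simps)
qed

lemma cube_coords_sphere_point:
  assumes P: "P \<in> cube k (\<lambda>_. 1)"
  shows "cube_coords k (sphere_point k P a b) = P"
proof -
  let ?N = "L2_set (sphere_coords k P a b) {..k}"
  have "sphere_point k P a b = (\<lambda>c. (1 / ?N) * sphere_coords k P a b c)"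
    by (simp add: sphere_point_def fun_eq_iff)
  moreover have "0 < 1 / ?N"
    using L2_sphere_coords_pos[OF P] by simp
  ultimately show ?thesis
    using cube_coords_scale[of "1 / ?N" "sphere_coords k P a b"] cube_coords_sphere_coords[OF P]
    by simp
qed

lemma sphere_point_eq_iff:
  assumes P: "P \<in> cube k (\<lambda>_. 1)" and P': "P' \<in> cube k (\<lambda>_. 1)"
  shows "sphere_point k P a b = sphere_point k P' a' b' \<longleftrightarrow>
           P = P' \<and> (cmax k P = 1 \<or> a = a') \<and> (cmin k P = 0 \<or> b = b')"
proof
  assume eq: "sphere_point k P a b = sphere_point k P' a' b'"
  have "P = cube_coords k (sphere_point k P' a' b')"
    using cube_coords_sphere_point[OF P, of a b] eq by simp
  then have "P = P'"
    using cube_coords_sphere_point[OF P'] by simp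
  with eq have eq: "sphere_point k P a b = sphere_point k P a' b'"
    by simp
  have "(sphere_coords k P a b c)\<^sup>2 = (sphere_coords k P a' b' c)\<^sup>2" for c
    by (simp add: sphere_coords_def power_mult_distrib)
  then have "L2_set (sphere_coords k P a b) {..k} = L2_set (sphere_coords k P a' b') {..k}"
    by (simp add: L2_set_def)
  then have coords: "sphere_coords k P a b = sphere_coords k P a' b'"
    using eq L2_sphere_coords_pos[OF P, of a b] by (simp add: sphere_point_def fun_eq_iff)
  have "bsign a * (1 - cmax k P) = bsign a' * (1 - cmax k P)"
    "bsign b * cmin k P = bsign b' * cmin k P"
    using fun_cong[OF coords, of j] fun_cong[OF coords, of k] by (simp_all add: sphere_coords_simps)
  with \<open>P = P'\<close> show "P = P' \<and> (cmax k P = 1 \<or> a = a') \<and> (cmin k P = 0 \<or> b = b')"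
    by auto
next
  assume h: "P = P' \<and> (cmax k P = 1 \<or> a = a') \<and> (cmin k P = 0 \<or> b = b')"
  then have "sphere_coords k P a b = sphere_coords k P a' b'"
    unfolding sphere_coords_def by (intro ext) auto
  then show "sphere_point k P a b = sphere_point k P' a' b'"
    using h by (simp add: sphere_point_def)
qed

lemma cube_coords_in_cube: "cube_coords k z \<in> cube k (\<lambda>_. 1)"
proof -
  have "0 \<le> cube_coords k z c \<and> cube_coords k z c \<le> 1" if "c < k" for c
  proof -
    have "0 \<le> leading k z c - cmin k (leading k z) + \<bar>z k\<bar>"
      "leading k z c - cmin k (leading k z) + \<bar>z k\<bar> \<le> cube_scale k z"
      using cmin_le[OF that, of "leading k z"] le_cmax[OF that, of "leading k z"]
      by (auto simp: cube_scale_def)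
    then show ?thesis
      using that by (auto simp: cube_coords_def divide_le_eq_1)
  qed
  then show ?thesis
    by (simp add: cube_def cube_coords_def)
qed

lemma sphere_coords_cube_coords:
  assumes z: "\<And>c. k < c \<Longrightarrow> z c = 0" and s: "0 < cube_scale k z"
  shows "sphere_coords k (cube_coords k z) (0 \<le> z j) (0 \<le> z k) = (\<lambda>c. z c / cube_scale k z)"
proof -
  let ?y = "leading k z" and ?s = "cube_scale k z"
  have P: "cube_coords k z c = (1 / ?s) * ?y c + (\<bar>z k\<bar> - cmin k ?y) / ?s" if "c < k" for c
    using that by (simp add: cube_coords_def add_divide_distrib diff_divide_distrib)
  have pos: "0 \<le> 1 / ?s"
    using s by simp
  have "cmax k (cube_coords k z) = cmax k (\<lambda>c. (1 / ?s) * ?y c + (\<bar>z k\<bar> - cmin k ?y) / ?s)"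
    "cmin k (cube_coords k z) = cmin k (\<lambda>c. (1 / ?s) * ?y c + (\<bar>z k\<bar> - cmin k ?y) / ?s)"
    by (rule cmax_cong cmin_cong, rule P, assumption)+
  then have max: "cmax k (cube_coords k z) = (cmax k ?y - cmin k ?y + \<bar>z k\<bar>) / ?s"
    and min: "cmin k (cube_coords k z) = \<bar>z k\<bar> / ?s"
    unfolding cmax_affine[OF pos] cmin_affine[OF pos]
    by (simp_all add: add_divide_distrib diff_divide_distrib)
  have "?s = \<bar>z j\<bar> + (cmax k ?y - cmin k ?y + \<bar>z k\<bar>)"
    by (simp add: cube_scale_def k_minus_1)
  then have "1 - cmax k (cube_coords k z) = \<bar>z j\<bar> / ?s"
    unfolding max using s by (simp add: diff_divide_eq_iff)
  show ?thesis
  proof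
    fix c
    consider "c < j" | "c = j" | "c = k" | "k < c"
      using kj by linarith
    then show "sphere_coords k (cube_coords k z) (0 \<le> z j) (0 \<le> z k) c = z c / ?s"
    proof cases
      case 1
      moreover have "c < k" "j < k"
        using 1 kj by simp_all
      ultimately show ?thesis
        using P by (simp add: sphere_coords_simps leading_def k_minus_1 diff_divide_distrib)
    next
      case 2
      then show ?thesis
        using \<open>1 - cmax k (cube_coords k z) = \<bar>z j\<bar> / ?s\<close>
        by (simp add: sphere_coords_simps bsign_mult_abs)
    next
      case 3
      then show ?thesis
        using min by (simp add: sphere_coords_simps bsign_mult_abs)
    qed (simp add: sphere_coords_simps z)
  qed
qed

lemma cube_scale_pos:
  assumes "c \<le> k" "z c \<noteq> 0"
  shows "0 < cube_scale k z"
proof (rule ccontr)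
  let ?y = "leading k z"
  assume "\<not> 0 < cube_scale k z"
  moreover have "cmin k ?y \<le> cmax k ?y"
    using cmin_le[of 0 k ?y] le_cmax[of 0 k ?y] kj by simp
  ultimately have zero: "z j = 0" "z k = 0" "cmax k ?y = cmin k ?y"
    by (auto simp: cube_scale_def k_minus_1)
  have "?y j = 0"
    by (simp add: leading_def k_minus_1)
  then have "cmin k ?y \<le> 0" "0 \<le> cmax k ?y"
    using cmin_le[of j k ?y] le_cmax[of j k ?y] kj by simp_all
  then have y0: "?y c' = 0" if "c' < k" for c'
    using cmin_le[OF that, of ?y] le_cmax[OF that, of ?y] zero(3) by linarith
  have "z c' = 0" if "c' < j" for c'
    using y0[of c'] that kj by (simp add: leading_def k_minus_1)
  moreover have "c < j \<or> c = j \<or> c = k"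
    using assms(1) kj by auto
  ultimately show False
    using assms(2) zero(1,2) by blast
qed

lemma sphere_point_cube_coords:
  assumes x: "x \<in> topspace (nsphere k)"
  shows "sphere_point k (cube_coords k x) (0 \<le> x j) (0 \<le> x k) = x"
proof -
  have x0: "\<And>c. k < c \<Longrightarrow> x c = 0" and x1: "L2_set x {..k} = 1"
    using x by (auto simp: nsphere L2_set_def)
  then obtain c where "c \<le> k" "x c \<noteq> 0"
    by (metis L2_set_0' atMost_iff zero_neq_one)
  then have s: "0 < cube_scale k x"
    by (rule cube_scale_pos)
  have "L2_set (\<lambda>c. x c / cube_scale k x) {..k} = 1 / cube_scale k x"
    using L2_set_right_distrib[of "1 / cube_scale k x" x "{..k}", symmetric] s x1 by simp
  then show ?thesis
    using s by (simp add: sphere_point_def sphere_coords_cube_coords[OF x0 s])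
qed

lemma continuous_map_sphere_point:
  assumes cont: "\<And>c. continuous_map X euclideanreal (\<lambda>x. f x c)"
    and cube: "\<And>x. x \<in> topspace X \<Longrightarrow> f x \<in> cube k (\<lambda>_. 1)"
  shows "continuous_map X (nsphere k) (\<lambda>x. sphere_point k (f x) a b)"
proof -
  have "continuous_map X euclideanreal (\<lambda>x. cmax k (f x))"
    "continuous_map X euclideanreal (\<lambda>x. cmin k (f x))"
    unfolding cmax_def cmin_def using lessThan_k_nonempty cont
    by (auto intro!: continuous_map_Max continuous_map_Min)
  then have coords: "continuous_map X euclideanreal (\<lambda>x. sphere_coords k (f x) a b c)" for c
    unfolding sphere_coords_def using cont by (auto intro!: continuous_intros)
  have "L2_set (sphere_coords k (f x) a b) {..k} \<noteq> 0" if "x \<in> topspace X" for x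
    using L2_sphere_coords_pos[OF cube[OF that], of a b] by linarith
  then have "continuous_map X (powertop_real UNIV) (\<lambda>x. sphere_point k (f x) a b)"
    unfolding continuous_map_componentwise_UNIV sphere_point_def L2_set_def
    by (intro allI continuous_intros coords) auto
  moreover have "sphere_point k (f x) a b \<in> {x. (\<Sum>i\<le>k. (x i)\<^sup>2) = 1 \<and> (\<forall>i>k. x i = 0)}"
    if "x \<in> topspace X" for x
    using sphere_point_in_nsphere[OF cube[OF that]] by (simp add: nsphere)
  ultimately show ?thesis
    by (simp add: nsphere continuous_map_in_subtopology)
qed

lemma cmax_eq_1_iff:
  assumes P: "P \<in> cube k (\<lambda>_. 1)"
  shows "cmax k P = 1 \<longleftrightarrow> {i. P i = 1} \<noteq> {}"
proof
  assume "cmax k P = 1"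
  moreover have "cmax k P \<in> P ` {..<k}"
    unfolding cmax_def using lessThan_k_nonempty by (intro Max_in) auto
  ultimately show "{i. P i = 1} \<noteq> {}"
    by (metis (mono_tags) empty_iff imageE mem_Collect_eq)
next
  assume "{i. P i = 1} \<noteq> {}"
  then obtain i where i: "P i = 1"
    by auto
  then have "i < k"
    using P by (cases "i < k") (auto simp: cube_def)
  then show "cmax k P = 1"
    using le_cmax[of i k P] cmax_cmin_bounds(2)[OF P] i by linarith
qed

lemma cmin_eq_0_iff:
  assumes P: "P \<in> cube k (\<lambda>_. 1)"
  shows "cmin k P = 0 \<longleftrightarrow> {i. 0 < P i} \<noteq> {..<k}"
proof
  assume "cmin k P = 0"
  moreover have "cmin k P \<in> P ` {..<k}"
    unfolding cmin_def using lessThan_k_nonempty by (intro Min_in) auto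
  ultimately obtain i where "i < k" "P i = 0"
    by (metis imageE lessThan_iff)
  then show "{i. 0 < P i} \<noteq> {..<k}"
    by (metis lessThan_iff mem_Collect_eq order_less_irrefl)
next
  assume "{i. 0 < P i} \<noteq> {..<k}"
  moreover have "{i. 0 < P i} \<subseteq> {..<k}"
    using P by (auto simp: cube_def) (metis linorder_not_le order_less_irrefl)
  ultimately obtain i where "i < k" "\<not> 0 < P i"
    by auto
  moreover have "0 \<le> P i"
    using P \<open>i < k\<close> by (simp add: cube_def)
  ultimately show "cmin k P = 0"
    using cmin_le[of i k P] cmax_cmin_bounds(1)[OF P] by linarith
qed

end

section \<open>A finite k-graph realising the sphere\<close>

text \<open>The morphism (p, q, a, b) is the face of the unit cube spanned by the vertices with
  coordinate sets p \<subseteq> q, in the copy with flags a and b. A flag is only recorded while the face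
  avoids the part of the cube where it is forgotten: a needs p = {} and b needs q = {..<k}.\<close>

type_synonym sph_mor = "nat set \<times> nat set \<times> bool \<times> bool"

definition sph_mors :: "nat \<Rightarrow> sph_mor set" where
  "sph_mors k = {(p, q, a, b). p \<subseteq> q \<and> q \<subseteq> {..<k} \<and> (a \<longrightarrow> p = {}) \<and> (b \<longrightarrow> q = {..<k})}"

fun sph_range :: "nat \<Rightarrow> sph_mor \<Rightarrow> sph_mor" where
  "sph_range k (p, q, a, b) = (p, p, a, b \<and> p = {..<k})"

fun sph_source :: "sph_mor \<Rightarrow> sph_mor" where
  "sph_source (p, q, a, b) = (q, q, a \<and> q = {}, b)"

fun sph_comp :: "sph_mor \<Rightarrow> sph_mor \<Rightarrow> sph_mor" where
  "sph_comp (p, q, a, b) (p', q', a', b') = (p, q', a, b')"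

fun sph_deg :: "sph_mor \<Rightarrow> nat \<Rightarrow> nat" where
  "sph_deg (p, q, a, b) = (\<lambda>i. if i \<in> q - p then 1 else 0)"

lemma finite_sph_mors: "finite (sph_mors k)"
proof (rule finite_subset)
  show "sph_mors k \<subseteq> Pow {..<k} \<times> Pow {..<k} \<times> UNIV \<times> UNIV"
    by (auto simp: sph_mors_def)
qed simp

lemma sph_deg_eq_iff: "sph_deg (p, q, a, b) = m \<longleftrightarrow> (\<forall>i. m i \<le> 1) \<and> {i. m i \<noteq> 0} = q - p"
proof
  assume h: "(\<forall>i. m i \<le> 1) \<and> {i. m i \<noteq> 0} = q - p"
  show "sph_deg (p, q, a, b) = m"
  proof
    fix i
    have "m i \<le> 1" "i \<in> q - p \<longleftrightarrow> m i \<noteq> 0"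
      using h by auto
    then show "sph_deg (p, q, a, b) i = m i"
      by auto
  qed
next
  assume "sph_deg (p, q, a, b) = m"
  then show "(\<forall>i. m i \<le> 1) \<and> {i. m i \<noteq> 0} = q - p"
    by (auto split: if_splits)
qed

lemma is_category_sph: "is_category (sph_mors k) (sph_range k) sph_source sph_comp"
  unfolding is_category_def
proof (intro conjI ballI impI)
  fix x assume "x \<in> sph_mors k"
  then obtain p q a b where x: "x = (p, q, a, b)" "p \<subseteq> q" "q \<subseteq> {..<k}" "a \<longrightarrow> p = {}"
      "b \<longrightarrow> q = {..<k}"
    by (cases x) (auto simp: sph_mors_def)
  show "sph_range k x \<in> sph_mors k" "sph_source x \<in> sph_mors k"
    "sph_range k (sph_range k x) = sph_range k x" "sph_source (sph_range k x) = sph_range k x"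
    "sph_range k (sph_source x) = sph_source x" "sph_source (sph_source x) = sph_source x"
    "sph_comp (sph_range k x) x = x" "sph_comp x (sph_source x) = x"
    using x by (auto simp: sph_mors_def)
next
  fix x y assume "x \<in> sph_mors k" "y \<in> sph_mors k" "sph_source x = sph_range k y"
  then obtain p q a b p' q' a' b'
    where x: "x = (p, q, a, b)" "p \<subseteq> q" "q \<subseteq> {..<k}" "a \<longrightarrow> p = {}" "b \<longrightarrow> q = {..<k}"
      and y: "y = (p', q', a', b')" "p' \<subseteq> q'" "q' \<subseteq> {..<k}" "a' \<longrightarrow> p' = {}" "b' \<longrightarrow> q' = {..<k}"
    by (cases x; cases y) (auto simp: sph_mors_def)
  have e: "p' = q" "a' = (a \<and> q = {})" "b = (b' \<and> p' = {..<k})"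
    using \<open>sph_source x = sph_range k y\<close> x y by auto
  show "sph_comp x y \<in> sph_mors k"
    using x y e by (auto simp: sph_mors_def)
  show "sph_range k (sph_comp x y) = sph_range k x" "sph_source (sph_comp x y) = sph_source y"
    using x y e by auto
next
  fix x y z show "sph_comp (sph_comp x y) z = sph_comp x (sph_comp y z)"
    by (cases x; cases y; cases z) auto
qed

lemma sph_deg_add_split:
  assumes "sph_deg (p, w, a, b) = (\<lambda>i. m i + n i)"
  shows "\<forall>i. m i \<le> 1" "\<forall>i. n i \<le> 1" "{i. m i \<noteq> 0} \<inter> {i. n i \<noteq> 0} = {}"
    "{i. m i \<noteq> 0} \<union> {i. n i \<noteq> 0} = w - p"
proof -
  have h: "(if i \<in> w - p then 1 else 0) = m i + n i" for i
    using fun_cong[OF assms, of i] by simp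
  show "\<forall>i. m i \<le> 1" "\<forall>i. n i \<le> 1"
    using h by (metis le_add1 le_add2 le_zero_eq zero_le_one)+
  show "{i. m i \<noteq> 0} \<inter> {i. n i \<noteq> 0} = {}"
  proof (rule equals0I)
    fix i assume "i \<in> {i. m i \<noteq> 0} \<inter> {i. n i \<noteq> 0}"
    with h[of i] show False by (auto split: if_splits)
  qed
  show "{i. m i \<noteq> 0} \<union> {i. n i \<noteq> 0} = w - p"
  proof (intro equalityI subsetI)
    fix i assume "i \<in> {i. m i \<noteq> 0} \<union> {i. n i \<noteq> 0}"
    with h[of i] show "i \<in> w - p" by (cases "i \<in> w - p") auto
  next
    fix i assume "i \<in> w - p"
    with h[of i] show "i \<in> {i. m i \<noteq> 0} \<union> {i. n i \<noteq> 0}" by auto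
  qed
qed

lemma sph_factorisation:
  assumes l: "l \<in> sph_mors k" and dl: "sph_deg l = (\<lambda>i. m i + n i)"
  shows "\<exists>!(x, y). x \<in> sph_mors k \<and> y \<in> sph_mors k \<and> sph_deg x = m \<and> sph_deg y = n \<and>
           sph_source x = sph_range k y \<and> sph_comp x y = l"
proof -
  obtain p w a b where lt: "l = (p, w, a, b)"
    by (cases l) auto
  have lE: "p \<subseteq> w" "w \<subseteq> {..<k}" "a \<longrightarrow> p = {}" "b \<longrightarrow> w = {..<k}"
    using l by (auto simp: lt sph_mors_def)
  note split = sph_deg_add_split[OF dl[unfolded lt]]
  define q where "q = p \<union> {i. m i \<noteq> 0}"
  define x where "x = (p, q, a, b \<and> q = {..<k})"
  define y where "y = (q, w, a \<and> q = {}, b)"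
  have q: "p \<subseteq> q" "q \<subseteq> w" "q - p = {i. m i \<noteq> 0}" "w - q = {i. n i \<noteq> 0}"
    using split lE by (auto simp: q_def)
  have xy: "x \<in> sph_mors k" "y \<in> sph_mors k" "sph_source x = sph_range k y" "sph_comp x y = l"
    using q lE by (auto simp: x_def y_def sph_mors_def lt)
  have deg: "sph_deg x = m" "sph_deg y = n"
    unfolding x_def y_def sph_deg_eq_iff using split q by simp_all
  have uniq: "(x', y') = (x, y)"
    if "x' \<in> sph_mors k" "y' \<in> sph_mors k" "sph_deg x' = m" "sph_deg y' = n"
      "sph_source x' = sph_range k y'" "sph_comp x' y' = l" for x' y'
  proof -
    obtain p1 q1 a1 b1 p2 q2 a2 b2 where xy': "x' = (p1, q1, a1, b1)" "y' = (p2, q2, a2, b2)"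
      by (cases x'; cases y') auto
    have e: "p1 = p" "a1 = a" "q2 = w" "b2 = b" "p2 = q1"
      using that(5,6) by (auto simp: lt xy')
    have "sph_deg (p1, q1, a1, b1) = m"
      using that(3) by (simp add: xy')
    then have "q1 - p1 = {i. m i \<noteq> 0}"
      unfolding sph_deg_eq_iff by blast
    moreover have "p1 \<subseteq> q1"
      using that(1) by (simp add: xy' sph_mors_def)
    ultimately have "q1 = q"
      using e by (auto simp: q_def)
    then show ?thesis
      using that(5) e by (simp add: xy' x_def y_def)
  qed
  show ?thesis
  proof (rule ex1I[of _ "(x, y)"])
    fix z
    assume "case z of (x', y') \<Rightarrow> x' \<in> sph_mors k \<and> y' \<in> sph_mors k \<and> sph_deg x' = m \<and>
      sph_deg y' = n \<and> sph_source x' = sph_range k y' \<and> sph_comp x' y' = l"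
    moreover obtain x' y' where z: "z = (x', y')"
      by (cases z)
    ultimately show "z = (x, y)"
      using uniq[of x' y'] by (simp add: z)
  qed (use xy deg in simp)
qed

lemma is_kgraph_sph: "is_kgraph k (sph_mors k) (sph_range k) sph_source sph_comp sph_deg"
  unfolding is_kgraph_def
proof (intro conjI ballI impI)
  show "countable (sph_mors k)"
    using finite_sph_mors by (rule countable_finite)
  show "is_category (sph_mors k) (sph_range k) sph_source sph_comp"
    by (rule is_category_sph)
next
  fix x assume "x \<in> sph_mors k"
  then show "sph_deg x \<in> Nk k" "sph_deg (sph_range k x) = (\<lambda>i. 0)"
    by (cases x; auto simp: sph_mors_def Nk_def)+
next
  fix x y assume "x \<in> sph_mors k" "y \<in> sph_mors k" "sph_source x = sph_range k y"
  then obtain p q a b q' a' b' where "x = (p, q, a, b)" "y = (q, q', a', b')" "p \<subseteq> q" "q \<subseteq> q'"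
    by (cases x; cases y) (auto simp: sph_mors_def)
  then show "sph_deg (sph_comp x y) = (\<lambda>i. sph_deg x i + sph_deg y i)"
    by (auto simp: fun_eq_iff)
qed (rule sph_factorisation)

text \<open>The point t of the cube of the morphism (p, q, a, b) is the point cube_point p t of the
  unit cube; its segment from flr t to ceil t is the smallest face containing it.\<close>

definition cube_point :: "nat set \<Rightarrow> (nat \<Rightarrow> real) \<Rightarrow> nat \<Rightarrow> real" where
  "cube_point p t = (\<lambda>i. if i \<in> p then 1 else t i)"

definition sph_map :: "nat \<Rightarrow> sph_mor \<times> (nat \<Rightarrow> real) \<Rightarrow> nat \<Rightarrow> real" where
  "sph_map k = (\<lambda>((p, q, a, b), t). sphere_point k (cube_point p t) a b)"

context
  fixes k p q a b t
  assumes x: "(p, q, a, b) \<in> sph_mors k" and t: "t \<in> cube k (sph_deg (p, q, a, b))"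
begin

lemma cube_sph_deg: "0 \<le> t i" "t i \<le> 1" "i \<notin> q - p \<Longrightarrow> t i = 0"
proof -
  have "q \<subseteq> {..<k}"
    using x by (simp add: sph_mors_def)
  then show "i \<notin> q - p \<Longrightarrow> t i = 0" "0 \<le> t i" "t i \<le> 1"
    using t by (cases "i < k"; force simp: cube_def split: if_splits)+
qed

lemma cube_point_in_cube: "cube_point p t \<in> cube k (\<lambda>_. 1)"
proof -
  have "i \<notin> q" "i \<notin> p" if "k \<le> i" for i
    using x that by (auto simp: sph_mors_def)
  then have "i \<notin> p" "t i = 0" if "k \<le> i" for i
    using cube_sph_deg(3) that by blast+
  then show ?thesis
    using cube_sph_deg(1,2) by (auto simp: cube_def cube_point_def)
qed

lemma segment_sph:
  "segment (sph_mors k) (sph_range k) sph_source sph_comp sph_deg (p, q, a, b) (flr t) (ceil t) =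
     ({i. cube_point p t i = 1}, {i. 0 < cube_point p t i},
      a \<and> {i. cube_point p t i = 1} = {}, b \<and> {i. 0 < cube_point p t i} = {..<k})"
    (is "_ = (?U, ?V, _, _)")
proof (rule segment_eqI[OF is_kgraph_sph x flr_le_ceil ceil_le_of_cube[OF t]])
  have tp: "i \<in> p \<Longrightarrow> t i = 0" for i
    using cube_sph_deg(3) by blast
  have flr_t: "flr t i = (if t i = 1 then 1 else 0)"
    and ceil_t: "ceil t i = (if t i = 0 then 0 else 1)" for i
    using cube_sph_deg(1,2)[of i] by (simp_all add: flr_def ceil_def floor_unit ceiling_unit)
  have flr: "flr t = sph_deg (p, ?U, a, b \<and> ?U = {..<k})"
    using tp by (force simp: fun_eq_iff flr_t cube_point_def)
  have ceil: "(\<lambda>i. ceil t i - flr t i) = sph_deg (?U, ?V, a \<and> ?U = {}, b \<and> ?V = {..<k})"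
  proof
    fix i
    show "ceil t i - flr t i = sph_deg (?U, ?V, a \<and> ?U = {}, b \<and> ?V = {..<k}) i"
      using tp[of i] cube_sph_deg(1)[of i]
      by (cases "i \<in> p") (auto simp: flr_t ceil_t cube_point_def)
  qed
  let ?\<alpha> = "(p, ?U, a, b \<and> ?U = {..<k})" and ?\<beta> = "(?U, ?V, a \<and> ?U = {}, b \<and> ?V = {..<k})"
    and ?\<gamma> = "(?V, q, a \<and> ?V = {}, b)"
  have "0 < t i \<Longrightarrow> i \<in> q" for i
    using cube_sph_deg(3)[of i] by auto
  then have "p \<subseteq> ?U" "?U \<subseteq> ?V" "?V \<subseteq> q"
    using x by (auto simp: cube_point_def sph_mors_def)
  then have "?\<alpha> \<in> sph_mors k" "?\<beta> \<in> sph_mors k" "?\<gamma> \<in> sph_mors k"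
    "sph_source ?\<alpha> = sph_range k ?\<beta>" "sph_source ?\<beta> = sph_range k ?\<gamma>"
    "sph_comp (sph_comp ?\<alpha> ?\<beta>) ?\<gamma> = (p, q, a, b)"
    using x by (auto simp: sph_mors_def)
  then show "is_segment (sph_mors k) (sph_range k) sph_source sph_comp sph_deg (p, q, a, b)
      (flr t) (ceil t) ?\<beta>"
    unfolding is_segment_def unfolding ceil unfolding flr by blast
qed

lemma frac_cube_point:
  "(\<lambda>i. t i - of_int \<lfloor>t i\<rfloor>) = (\<lambda>i. cube_point p t i - of_int \<lfloor>cube_point p t i\<rfloor>)"
  using cube_sph_deg by (auto simp: fun_eq_iff cube_point_def)

end

lemma sph_realisation_rel_iff:
  assumes kj: "k = Suc j"
    and x: "(p, q, a, b) \<in> sph_mors k" "t \<in> cube k (sph_deg (p, q, a, b))"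
    and x': "(p', q', a', b') \<in> sph_mors k" "t' \<in> cube k (sph_deg (p', q', a', b'))"
  shows "realisation_rel (sph_mors k) (sph_range k) sph_source sph_comp sph_deg
           ((p, q, a, b), t) ((p', q', a', b'), t') \<longleftrightarrow>
         sphere_point k (cube_point p t) a b = sphere_point k (cube_point p' t') a' b'"
proof -
  let ?P = "cube_point p t" and ?P' = "cube_point p' t'"
  have P: "?P \<in> cube k (\<lambda>_. 1)" "?P' \<in> cube k (\<lambda>_. 1)"
    using cube_point_in_cube x x' by blast+
  have "realisation_rel (sph_mors k) (sph_range k) sph_source sph_comp sph_deg
          ((p, q, a, b), t) ((p', q', a', b'), t') \<longleftrightarrow>
        ({i. ?P i = 1}, {i. 0 < ?P i}, a \<and> {i. ?P i = 1} = {}, b \<and> {i. 0 < ?P i} = {..<k}) =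
        ({i. ?P' i = 1}, {i. 0 < ?P' i}, a' \<and> {i. ?P' i = 1} = {}, b' \<and> {i. 0 < ?P' i} = {..<k}) \<and>
        (\<lambda>i. ?P i - of_int \<lfloor>?P i\<rfloor>) = (\<lambda>i. ?P' i - of_int \<lfloor>?P' i\<rfloor>)"
    unfolding realisation_rel_def using segment_sph[OF x] segment_sph[OF x'] frac_cube_point[OF x]
      frac_cube_point[OF x'] by simp
  also have "\<dots> \<longleftrightarrow> ?P = ?P' \<and> ({i. ?P i = 1} \<noteq> {} \<or> a = a') \<and> ({i. 0 < ?P i} \<noteq> {..<k} \<or> b = b')"
  proof (cases "?P = ?P'")
    case True
    have "(U, V, a \<and> U = {}, b \<and> V = W) = (U, V, a' \<and> U = {}, b' \<and> V = W) \<longleftrightarrow>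
        (U \<noteq> {} \<or> a = a') \<and> (V \<noteq> W \<or> b = b')" for U V W :: "nat set"
      by auto
    then show ?thesis
      unfolding True by (simp only: simp_thms)
  next
    case False
    with unit_cube_eq_iff[OF P] show ?thesis
      by (simp only: prod.inject) blast
  qed
  also have "\<dots> \<longleftrightarrow> ?P = ?P' \<and> (cmax k ?P = 1 \<or> a = a') \<and> (cmin k ?P = 0 \<or> b = b')"
    using cmax_eq_1_iff[OF kj P(1)] cmin_eq_0_iff[OF kj P(1)] by simp
  also have "\<dots> \<longleftrightarrow> sphere_point k ?P a b = sphere_point k ?P' a' b'"
    using sphere_point_eq_iff[OF kj P] by simp
  finally show ?thesis .
qed

lemma realisation_map_sph:
  assumes kj: "k = Suc j"
  shows "realisation_map k (sph_mors k) (sph_range k) sph_source sph_comp sph_deg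
           (nsphere k) (sph_map k)"
  unfolding realisation_map_def
proof (intro conjI ballI)
  fix x assume x: "x \<in> sph_mors k"
  obtain p q a b where xt: "x = (p, q, a, b)"
    by (cases x)
  have "continuous_map (subtopology (Euclidean_space k) (cube k (sph_deg x))) euclideanreal
          (\<lambda>t. cube_point p t c)" for c
    unfolding cube_point_def Euclidean_space_def
    by (cases "c \<in> p")
      (auto intro: continuous_map_from_subtopology continuous_map_product_projection)
  then show "continuous_map (subtopology (Euclidean_space k) (cube k (sph_deg x))) (nsphere k)
      (\<lambda>t. sph_map k (x, t))"
    unfolding sph_map_def xt prod.case
    using cube_point_in_cube x
    by (intro continuous_map_sphere_point[OF kj]) (auto simp: xt topspace_cube)
next
  show "sph_map k ` (SIGMA x:sph_mors k. cube k (sph_deg x)) = topspace (nsphere k)"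
  proof
    show "sph_map k ` (SIGMA x:sph_mors k. cube k (sph_deg x)) \<subseteq> topspace (nsphere k)"
      using sphere_point_in_nsphere[OF kj cube_point_in_cube] by (auto simp: sph_map_def)
  next
    show "topspace (nsphere k) \<subseteq> sph_map k ` (SIGMA x:sph_mors k. cube k (sph_deg x))"
    proof
      fix y assume y: "y \<in> topspace (nsphere k)"
      let ?x = "({}, {..<k}, 0 \<le> y j, 0 \<le> y k)"
      have "?x \<in> sph_mors k" "cube_coords k y \<in> cube k (sph_deg ?x)"
        using cube_coords_in_cube[OF kj, of y] by (auto simp: sph_mors_def cube_def)
      moreover have "y = sph_map k (?x, cube_coords k y)"
        using sphere_point_cube_coords[OF kj y] by (simp add: sph_map_def cube_point_def)
      ultimately show "y \<in> sph_map k ` (SIGMA x:sph_mors k. cube k (sph_deg x))"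
        by (blast intro: image_eqI SigmaI)
    qed
  qed
next
  fix u v
  assume uv: "u \<in> (SIGMA x:sph_mors k. cube k (sph_deg x))" "v \<in> (SIGMA x:sph_mors k. cube k (sph_deg x))"
  obtain p q a b t p' q' a' b' t' where "u = ((p, q, a, b), t)" "v = ((p', q', a', b'), t')"
    by (metis prod_cases4 surj_pair)
  with uv show "realisation_rel (sph_mors k) (sph_range k) sph_source sph_comp sph_deg u v \<longleftrightarrow>
      sph_map k u = sph_map k v"
    using sph_realisation_rel_iff[OF kj, of p q a b t p' q' a' b' t'] by (simp add: sph_map_def)
qed

lemma Hausdorff_nsphere: "Hausdorff_space (nsphere k)"
  unfolding nsphere_def by (intro Hausdorff_space_subtopology Hausdorff_Euclidean_space)

lemma cube_0: "cube 0 m = {\<lambda>_. 0}"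
  by (auto simp: cube_def)

lemma is_kgraph_two_points: "is_kgraph 0 {0, 1 :: nat} (\<lambda>x. x) (\<lambda>x. x) (\<lambda>x y. x) (\<lambda>x i. 0)"
  unfolding is_kgraph_def is_category_def
proof (intro conjI ballI impI)
  fix m n :: "nat \<Rightarrow> nat" and l :: nat
  assume "m \<in> Nk 0" "n \<in> Nk 0" "l \<in> {0, 1}"
  then show "\<exists>!(x, y). x \<in> {0, 1} \<and> y \<in> {0, 1} \<and> (\<lambda>i. 0) = m \<and> (\<lambda>i. 0) = n \<and> x = y \<and> x = l"
    by (intro ex1I[of _ "(l, l)"]) (auto simp: Nk_def)
qed (auto simp: Nk_def)

definition two_point_map :: "nat \<times> (nat \<Rightarrow> real) \<Rightarrow> nat \<Rightarrow> real" where
  "two_point_map = (\<lambda>(l, t) i. if i = 0 then (if l = 0 then 1 else -1) else 0)"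

lemma realisation_map_two_points:
  "realisation_map 0 {0, 1 :: nat} (\<lambda>x. x) (\<lambda>x. x) (\<lambda>x y. x) (\<lambda>x i. 0) (nsphere 0) two_point_map"
  unfolding realisation_map_def
proof (intro conjI ballI)
  have "topspace (nsphere 0) \<subseteq> {two_point_map (0, \<lambda>_. 0), two_point_map (1, \<lambda>_. 0)}"
  proof
    fix y assume "y \<in> topspace (nsphere 0)"
    then have y0: "y 0 = 1 \<or> y 0 = -1" and y: "y = (\<lambda>i. if i = 0 then y 0 else 0)"
      by (auto simp: nsphere power2_eq_1_iff fun_eq_iff)
    from y0 show "y \<in> {two_point_map (0, \<lambda>_. 0), two_point_map (1, \<lambda>_. 0)}"
    proof
      assume "y 0 = 1"
      with y show ?thesis by (simp add: two_point_map_def del: One_nat_def) (metis)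
    next
      assume "y 0 = -1"
      with y show ?thesis by (simp add: two_point_map_def) (metis)
    qed
  qed
  moreover have "{two_point_map (0, \<lambda>_. 0), two_point_map (1, \<lambda>_. 0)} \<subseteq> topspace (nsphere 0)"
    by (auto simp: nsphere two_point_map_def)
  ultimately have sphere:
      "topspace (nsphere 0) = {two_point_map (0, \<lambda>_. 0), two_point_map (1, \<lambda>_. 0)}"
    by (rule equalityI)
  then show "two_point_map ` (SIGMA l:{0, 1}. cube 0 ((\<lambda>x i. 0) l)) = topspace (nsphere 0)"
    by (auto simp: cube_0)
  show "continuous_map (subtopology (Euclidean_space 0) (cube 0 ((\<lambda>x i. 0) l))) (nsphere 0)
      (\<lambda>t. two_point_map (l, t))" for l
    using sphere by (simp add: two_point_map_def)
next
  have seg: "segment {0, 1} (\<lambda>x. x) (\<lambda>x. x) (\<lambda>x y. x) (\<lambda>x i. 0) l (\<lambda>_. 0) (\<lambda>_. 0) = l"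
    if "l \<in> {0, 1 :: nat}" for l
    using that by (intro segment_eqI[OF is_kgraph_two_points]) (auto simp: is_segment_def)
  have flr_ceil: "flr (\<lambda>_. 0) = (\<lambda>_. 0)" "ceil (\<lambda>_. 0) = (\<lambda>_. 0)"
    by (simp_all add: flr_def ceil_def)
  fix u v
  assume "u \<in> (SIGMA l:{0, 1 :: nat}. cube 0 ((\<lambda>x i. 0) l))"
    and "v \<in> (SIGMA l:{0, 1 :: nat}. cube 0 ((\<lambda>x i. 0) l))"
  then obtain l l' where uv: "u = (l, \<lambda>_. 0)" "v = (l', \<lambda>_. 0)" "l \<in> {0, 1}" "l' \<in> {0, 1}"
    by (auto simp: cube_0)
  then have "two_point_map u = two_point_map v \<longleftrightarrow> l = l'"
    by (auto simp: two_point_map_def dest: fun_cong[where x = 0])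
  then show "realisation_rel {0, 1} (\<lambda>x. x) (\<lambda>x. x) (\<lambda>x y. x) (\<lambda>x i. 0) u v \<longleftrightarrow>
      two_point_map u = two_point_map v"
    using uv seg[OF uv(3)] seg[OF uv(4)] by (simp add: realisation_rel_def flr_ceil)
qed

theorem theorem5p1:
  fixes k :: nat
  shows "\<exists>(L :: nat set) r s cmp d. is_kgraph k L r s cmp d \<and> finite L \<and>
           realisation k L r s cmp d homeomorphic_space nsphere k"
proof (cases k)
  case 0
  have "realisation 0 {0, 1 :: nat} (\<lambda>x. x) (\<lambda>x. x) (\<lambda>x y. x) (\<lambda>x i. 0)
      homeomorphic_space nsphere 0"
    by (rule realisation_homeomorphic_space[OF _ Hausdorff_nsphere realisation_map_two_points]) simp
  then show ?thesis
    using 0 is_kgraph_two_points by blast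
next
  case (Suc j)
  let ?f = "to_nat_on (sph_mors k)" and ?g = "from_nat_into (sph_mors k)"
  have gf: "\<And>x. x \<in> sph_mors k \<Longrightarrow> ?g (?f x) = x"
    by (simp add: countable_finite finite_sph_mors)
  let ?L = "?f ` sph_mors k" and ?r = "\<lambda>u. ?f (sph_range k (?g u))"
    and ?s = "\<lambda>u. ?f (sph_source (?g u))"
    and ?cmp = "\<lambda>u v. ?f (sph_comp (?g u) (?g v))" and ?d = "\<lambda>u. sph_deg (?g u)"
  have "is_kgraph k ?L ?r ?s ?cmp ?d"
    by (rule is_kgraph_image[OF is_kgraph_sph]) (rule gf)
  moreover have "realisation_map k ?L ?r ?s ?cmp ?d (nsphere k) (\<lambda>(u, t). sph_map k (?g u, t))"
    by (rule realisation_map_image[OF is_kgraph_sph _ realisation_map_sph[OF Suc]]) (rule gf)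
  then have "realisation k ?L ?r ?s ?cmp ?d homeomorphic_space nsphere k"
    using finite_sph_mors Hausdorff_nsphere by (intro realisation_homeomorphic_space) auto
  ultimately show ?thesis
    using finite_sph_mors by blast
qed

end
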